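(* There exists an absolute constant $C$ such that for every integer $k\geq 1$, every $k$-nearest-neighbour graph of a finite point set in $\mathbb{R}^2$, drawn with straight-line edges, has every edge involved in at most $Ck^2$ crossings; in particular every $k$-nearest-neighbour graph is $Ck^2$-planar.
   Context: For a finite set $P\subset\mathbb{R}^2$ and $v\in P$, let $N_k(v)$ be the set of $k$ points of $P\setminus\{v\}$ closest to $v$ in Euclidean distance. The $k$-nearest-neighbour graph of $P$ is the geometric graph with vertex set $P$ in which $vw$ is an edge iff $w\in N_k(v)$ or $v\in N_k(w)$, edges being the straight-line segments between their endpoints. A graph is $m$-planar if it has a drawing in the plane in which each edge is involved in at most $m$ crossings. *)

theory Defs
  imports "HOL-Analysis.Analysis"
begin

type_synonym point = "real ^ 2"

text \<open>Ties are allowed and resolved arbitrarily by N.\<close>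
definition knn_choice :: "nat \<Rightarrow> point set \<Rightarrow> (point \<Rightarrow> point set) \<Rightarrow> bool" where
  "knn_choice k P N \<longleftrightarrow>
     (\<forall>v\<in>P. N v \<subseteq> P - {v} \<and> card (N v) = min k (card P - 1) \<and>
        (\<forall>w\<in>N v. \<forall>u\<in>P - {v} - N v. dist v w \<le> dist v u))"

definition knn_edges :: "point set \<Rightarrow> (point \<Rightarrow> point set) \<Rightarrow> point set set" where
  "knn_edges P N = {{v, w} | v w. v \<in> P \<and> w \<in> P \<and> (w \<in> N v \<or> v \<in> N w)}"

definition edges_cross :: "point set \<Rightarrow> point set \<Rightarrow> bool" where
  "edges_cross e f \<longleftrightarrow> e \<inter> f = {} \<and>
     (\<exists>a b c d. e = {a, b} \<and> f = {c, d} \<and> closed_segment a b \<inter> closed_segment c d \<noteq> {})"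

end

theory Submission
  imports Defs
begin

text \<open>Let the edge \<open>vw\<close> with \<open>w \<in> N v\<close> cross the edge \<open>xy\<close> with \<open>y \<in> N x\<close> at a point \<open>p\<close>.
  Splitting both edges at \<open>p\<close> and using the triangle inequality, either \<open>dist v y < dist v w\<close>,
  so that \<open>y\<close> is one of the \<open>k\<close> neighbours of \<open>v\<close>, or \<open>dist x w \<le> dist x y\<close>, so that \<open>w\<close> lies
  in the disc around \<open>x\<close> through its farthest neighbour. Every point lies in at most \<open>25 k\<close> such
  discs: split the directions around it into 25 sectors of angular width below \<open>60\<degree>\<close>, given by
  the integer parts of twice the coordinates of the unit direction vector; in each
  sector the farthest disc centre sees all other centres of the sector strictly closer than
  the point itself, hence among its \<open>k\<close> neighbours. Consequently every vertex has degree at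
  most \<open>k + 25 k\<close>, and an edge \<open>vw\<close> crosses at most \<open>k \<cdot> 26 k\<close> edges at neighbours of \<open>v\<close> plus
  \<open>25 k \<cdot> k\<close> edges from centres of discs containing \<open>w\<close>, i.e. at most \<open>51 k\<^sup>2\<close> edges.\<close>

lemma norm_diff_lt_if_inner_gt_half:
  fixes u v :: "'a::real_inner"
  assumes inner: "inner u v > norm u * norm v / 2" and le: "norm v \<le> norm u"
  shows "norm (u - v) < norm u"
proof -
  have "(norm (u - v))^2 = (norm u)^2 + (norm v)^2 - 2 * inner u v"
    unfolding power2_norm_eq_inner by (simp add: inner_diff_left inner_diff_right inner_commute)
  also have "\<dots> < (norm u)^2 - norm v * (norm u - norm v)"
    using inner by (simp add: power2_eq_square algebra_simps)
  also have "\<dots> \<le> (norm u)^2"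
    using le by simp
  finally show ?thesis
    by (rule power2_less_imp_less) simp
qed

lemma inner_gt_half_if_dist_sgn_lt_1:
  fixes u v :: "'a::real_inner"
  assumes "u \<noteq> 0" "v \<noteq> 0" and close: "dist (sgn u) (sgn v) < 1"
  shows "inner u v > norm u * norm v / 2"
proof -
  have "inner (sgn u) (sgn v) = 1 - (dist (sgn u) (sgn v))^2 / 2"
    using assms(1,2) by (simp add: dot_norm_neg norm_sgn dist_norm)
  then have "inner (sgn u) (sgn v) > 1/2"
    using close power_strict_mono[of "dist (sgn u) (sgn v)" 1 2] by simp
  moreover have "inner u v = norm u * norm v * inner (sgn u) (sgn v)"
    using assms(1,2) by (simp add: sgn_div_norm field_simps)
  ultimately show ?thesis
    using assms(1,2) by simp
qed

lemma dist_lt_norm_if_dist_sgn_lt_1: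
  fixes u v :: "'a::real_inner"
  assumes "u \<noteq> 0" "v \<noteq> 0" "dist (sgn u) (sgn v) < 1" "norm v \<le> norm u"
  shows "dist u v < norm u"
  using norm_diff_lt_if_inner_gt_half[OF inner_gt_half_if_dist_sgn_lt_1] assms
  by (simp add: dist_norm)

definition dir_class :: "point \<Rightarrow> int \<times> int" where
  "dir_class u = (\<lfloor>2 * sgn u $ 1\<rfloor>, \<lfloor>2 * sgn u $ 2\<rfloor>)"

lemma dir_class_in_range: "dir_class u \<in> {-2..2} \<times> {-2..2}"
proof -
  have "\<bar>sgn u $ i\<bar> \<le> 1" for i
    using component_le_norm_cart[of "sgn u" i] by (simp add: norm_sgn split: if_splits)
  then have "-2 \<le> 2 * sgn u $ i" "2 * sgn u $ i \<le> 2" for i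
    by (simp_all add: abs_le_iff)
  then have "\<lfloor>2 * sgn u $ i\<rfloor> \<in> {-2..2}" for i
    using floor_mono[of "-2" "2 * sgn u $ i"] floor_mono[of "2 * sgn u $ i" 2] by simp
  then show ?thesis
    by (simp add: dir_class_def)
qed

lemma dist_sgn_lt_1_if_dir_class_eq:
  assumes "dir_class u = dir_class v"
  shows "dist (sgn u) (sgn v) < 1"
proof -
  have sq: "(sgn u $ i - sgn v $ i)^2 < (1/2)^2" if "i = 1 \<or> i = 2" for i
  proof -
    have "\<lfloor>2 * sgn u $ i\<rfloor> = \<lfloor>2 * sgn v $ i\<rfloor>"
      using assms that by (auto simp: dir_class_def)
    then have "\<bar>sgn u $ i - sgn v $ i\<bar> < 1/2"
      by linarith
    then show ?thesis
      using power_strict_mono[of "\<bar>sgn u $ i - sgn v $ i\<bar>" "1/2" 2] by simp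
  qed
  have "(dist (sgn u) (sgn v))^2 < 1^2"
    using sq[of 1] sq[of 2] unfolding dist_norm power2_norm_eq_inner inner_vec_def sum_2
    by (simp add: power2_eq_square)
  then show ?thesis
    by (rule power2_less_imp_less) simp
qed

lemma card_UN_le_mult:
  assumes "finite I" and "\<And>i. i \<in> I \<Longrightarrow> card (A i) \<le> m"
  shows "card (\<Union>i\<in>I. A i) \<le> card I * m"
  using card_UN_le[OF assms(1), of A] sum_bounded_above[of I "\<lambda>i. card (A i)" m] assms(2)
  by simp

lemma knn_choice_neighbours_subset: "knn_choice k P N \<Longrightarrow> v \<in> P \<Longrightarrow> N v \<subseteq> P - {v}"
  by (simp add: knn_choice_def)

lemma knn_choice_card_neighbours_le: "knn_choice k P N \<Longrightarrow> v \<in> P \<Longrightarrow> card (N v) \<le> k"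
  by (simp add: knn_choice_def)

lemma knn_choice_finite_neighbours:
  "knn_choice k P N \<Longrightarrow> finite P \<Longrightarrow> v \<in> P \<Longrightarrow> finite (N v)"
  by (meson finite_Diff finite_subset knn_choice_neighbours_subset)

lemma knn_choice_closer_in_neighbours:
  assumes "knn_choice k P N" "v \<in> P" "w \<in> N v" "u \<in> P - {v}" "dist v u < dist v w"
  shows "u \<in> N v"
  using assms unfolding knn_choice_def by force

lemma knn_edges_eq:
  assumes "knn_choice k P N"
  shows "knn_edges P N = (\<Union>v\<in>P. (\<lambda>w. {v, w}) ` N v)"
  using knn_choice_neighbours_subset[OF assms] unfolding knn_edges_def by (auto 4 4)

lemma finite_knn_edges: "knn_choice k P N \<Longrightarrow> finite P \<Longrightarrow> finite (knn_edges P N)"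
  by (simp add: knn_edges_eq knn_choice_finite_neighbours)

lemma card_knn_edges_from_le:
  assumes kc: "knn_choice k P N" and fin: "finite P" and "S \<subseteq> P"
  shows "card (\<Union>x\<in>S. (\<lambda>y. {x, y}) ` N x) \<le> card S * k"
proof (rule card_UN_le_mult)
  show "finite S"
    using fin \<open>S \<subseteq> P\<close> by (rule finite_subset[rotated])
  fix x assume "x \<in> S"
  then have xP: "x \<in> P"
    using \<open>S \<subseteq> P\<close> by blast
  show "card ((\<lambda>y. {x, y}) ` N x) \<le> k"
    using le_trans[OF card_image_le[OF knn_choice_finite_neighbours[OF kc fin xP]]
        knn_choice_card_neighbours_le[OF kc xP]] .
qed

definition knn_discs_containing :: "point set \<Rightarrow> (point \<Rightarrow> point set) \<Rightarrow> point \<Rightarrow> point set" where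
  "knn_discs_containing P N q = {x \<in> P - {q}. \<exists>y\<in>N x. dist x q \<le> dist x y}"

lemma card_knn_discs_containing_dir_class_le:
  assumes kc: "knn_choice k P N" and fin: "finite P"
  shows "card {x \<in> knn_discs_containing P N q. dir_class (x - q) = c} \<le> k"
    (is "card ?C \<le> k")
proof (cases "?C = {}")
  case False
  have finC: "finite ?C"
    using fin by (simp add: knn_discs_containing_def)
  then obtain x where xC: "x \<in> ?C" and x_max: "Max ((\<lambda>x. dist x q) ` ?C) = dist x q"
    using False by (rule obtains_MAX)
  then have xP: "x \<in> P" and xq: "x \<noteq> q"
    by (auto simp: knn_discs_containing_def)
  from xC obtain y where yN: "y \<in> N x" and y_far: "dist x q \<le> dist x y"
    by (auto simp: knn_discs_containing_def)
  have "?C - {x} \<subseteq> N x - {y}"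
  proof
    fix x' assume x': "x' \<in> ?C - {x}"
    then have x'P: "x' \<in> P - {x}" and x'q: "x' \<noteq> q"
      by (auto simp: knn_discs_containing_def)
    have "dist x' q \<le> Max ((\<lambda>x. dist x q) ` ?C)"
      using finC x' by (intro Max_ge) auto
    then have "norm (x' - q) \<le> norm (x - q)"
      using x_max by (simp add: dist_norm)
    moreover have "dist (sgn (x - q)) (sgn (x' - q)) < 1"
      using x' xC by (intro dist_sgn_lt_1_if_dir_class_eq) simp
    ultimately have "dist (x - q) (x' - q) < norm (x - q)"
      using xq x'q by (intro dist_lt_norm_if_dist_sgn_lt_1) simp_all
    then have "dist x x' < dist x y"
      using y_far by (simp add: dist_norm)
    then show "x' \<in> N x - {y}"
      using knn_choice_closer_in_neighbours[OF kc xP yN x'P] by auto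
  qed
  moreover have finN: "finite (N x)"
    using knn_choice_finite_neighbours[OF kc fin xP] .
  ultimately have "card (?C - {x}) \<le> card (N x - {y})"
    by (intro card_mono) auto
  then show ?thesis
    using card_Suc_Diff1[OF finC xC] card_Suc_Diff1[OF finN yN]
      knn_choice_card_neighbours_le[OF kc xP]
    by linarith
qed (simp only: card.empty le0)

lemma card_knn_discs_containing_le:
  assumes kc: "knn_choice k P N" and fin: "finite P"
  shows "card (knn_discs_containing P N q) \<le> 25 * k"
proof -
  let ?D = "knn_discs_containing P N q"
  let ?I = "(\<lambda>x. dir_class (x - q)) ` ?D"
  have finI: "finite ?I"
    using fin by (simp add: knn_discs_containing_def)
  have "card ?I \<le> card ({-2..2::int} \<times> {-2..2::int})"
    by (intro card_mono image_subsetI dir_class_in_range) simp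
  then have card_I: "card ?I \<le> 25"
    by (simp add: card_cartesian_product)
  have "card ?D = card (\<Union>c\<in>?I. {x \<in> ?D. dir_class (x - q) = c})"
    by (rule arg_cong[where f = card]) auto
  also have "\<dots> \<le> card ?I * k"
    using finI card_knn_discs_containing_dir_class_le[OF kc fin] by (rule card_UN_le_mult)
  also have "\<dots> \<le> 25 * k"
    using card_I by simp
  finally show ?thesis .
qed

lemma knn_edges_at_subset:
  assumes kc: "knn_choice k P N"
  shows "{f \<in> knn_edges P N. z \<in> f} \<subseteq> (\<lambda>u. {z, u}) ` (N z \<union> knn_discs_containing P N z)"
proof
  fix f assume f: "f \<in> {f \<in> knn_edges P N. z \<in> f}"
  then obtain v w where vw: "f = {v, w}" and vP: "v \<in> P" and wN: "w \<in> N v"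
    unfolding knn_edges_eq[OF kc] by blast
  have "z = v \<or> z = w"
    using f vw by blast
  then show "f \<in> (\<lambda>u. {z, u}) ` (N z \<union> knn_discs_containing P N z)"
  proof
    assume "z = v"
    then show ?thesis
      using vw wN by blast
  next
    assume zw: "z = w"
    then have "v \<in> knn_discs_containing P N z"
      using vP wN knn_choice_neighbours_subset[OF kc vP] by (auto simp: knn_discs_containing_def)
    moreover have "f = {z, v}"
      using vw zw by blast
    ultimately show ?thesis
      by blast
  qed
qed

lemma card_knn_edges_at_le:
  assumes kc: "knn_choice k P N" and fin: "finite P" and zP: "z \<in> P"
  shows "card {f \<in> knn_edges P N. z \<in> f} \<le> 26 * k"
proof -
  have fin_discs: "finite (knn_discs_containing P N z)"
    using fin by (simp add: knn_discs_containing_def)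
  have fin_N: "finite (N z)"
    using knn_choice_finite_neighbours[OF kc fin zP] .
  have "card {f \<in> knn_edges P N. z \<in> f} \<le> card ((\<lambda>u. {z, u}) ` (N z \<union> knn_discs_containing P N z))"
    using knn_edges_at_subset[OF kc] fin_discs fin_N by (intro card_mono) auto
  also have "\<dots> \<le> card (N z \<union> knn_discs_containing P N z)"
    using fin_discs fin_N by (intro card_image_le) simp
  also have "\<dots> \<le> card (N z) + card (knn_discs_containing P N z)"
    by (rule card_Un_le)
  also have "\<dots> \<le> 26 * k"
    using knn_choice_card_neighbours_le[OF kc zP] card_knn_discs_containing_le[OF kc fin, of z]
    by linarith
  finally show ?thesis .
qed

lemma edges_cross_doubleton_iff:
  "edges_cross {a, b} {c, d} \<longleftrightarrow>
     {a, b} \<inter> {c, d} = {} \<and> closed_segment a b \<inter> closed_segment c d \<noteq> {}"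
proof -
  have "closed_segment a' b' = closed_segment a b" if "{a', b'} = {a, b}" for a b a' b' :: point
    using that by (auto simp: doubleton_eq_iff closed_segment_commute)
  then show ?thesis
    unfolding edges_cross_def by metis
qed

lemma knn_crossing_cases:
  assumes kc: "knn_choice k P N" and vP: "v \<in> P" and wN: "w \<in> N v" and xP: "x \<in> P" and yN: "y \<in> N x"
    and disj: "{v, w} \<inter> {x, y} = {}"
    and p: "p \<in> closed_segment v w" "p \<in> closed_segment x y"
  shows "y \<in> N v \<or> x \<in> knn_discs_containing P N w"
proof (cases "dist x w \<le> dist x y")
  case True
  then show ?thesis
    using xP yN disj by (auto simp: knn_discs_containing_def)
next
  case False
  have "dist v w = dist v p + dist p w" "dist x y = dist x p + dist p y"
    using p by (simp_all flip: between_mem_segment add: between)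
  moreover have "dist v y \<le> dist v p + dist p y" "dist x w \<le> dist x p + dist p w"
    by (simp_all add: dist_triangle)
  ultimately have "dist v y < dist v w"
    using False by linarith
  moreover have "y \<in> P - {v}"
    using knn_choice_neighbours_subset[OF kc xP] yN disj by auto
  ultimately show ?thesis
    using knn_choice_closer_in_neighbours[OF kc vP wN] by blast
qed

lemma crossing_knn_edges_subset:
  assumes kc: "knn_choice k P N" and vP: "v \<in> P" and wN: "w \<in> N v"
  shows "{f \<in> knn_edges P N. edges_cross {v, w} f} \<subseteq>
           (\<Union>z\<in>N v. {f \<in> knn_edges P N. z \<in> f}) \<union>
           (\<Union>x\<in>knn_discs_containing P N w. (\<lambda>y. {x, y}) ` N x)"
proof
  fix f assume "f \<in> {f \<in> knn_edges P N. edges_cross {v, w} f}"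
  then have fE: "f \<in> knn_edges P N" and cross: "edges_cross {v, w} f"
    by auto
  then obtain x y where f: "f = {x, y}" and xP: "x \<in> P" and yN: "y \<in> N x"
    unfolding knn_edges_eq[OF kc] by blast
  from cross obtain p where "{v, w} \<inter> {x, y} = {}" "p \<in> closed_segment v w" "p \<in> closed_segment x y"
    unfolding f edges_cross_doubleton_iff by blast
  then consider "y \<in> N v" | "x \<in> knn_discs_containing P N w"
    using knn_crossing_cases[OF kc vP wN xP yN] by blast
  then show "f \<in> (\<Union>z\<in>N v. {f \<in> knn_edges P N. z \<in> f}) \<union>
                 (\<Union>x\<in>knn_discs_containing P N w. (\<lambda>y. {x, y}) ` N x)"
    by cases (use fE f yN in auto)
qed

lemma card_crossing_knn_edges_le:
  assumes kc: "knn_choice k P N" and fin: "finite P" and vP: "v \<in> P" and wN: "w \<in> N v"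
  shows "card {f \<in> knn_edges P N. edges_cross {v, w} f} \<le> 51 * k^2"
proof -
  let ?A = "\<Union>z\<in>N v. {f \<in> knn_edges P N. z \<in> f}"
  let ?B = "\<Union>x\<in>knn_discs_containing P N w. (\<lambda>y. {x, y}) ` N x"
  have discs_sub: "knn_discs_containing P N w \<subseteq> P"
    by (auto simp: knn_discs_containing_def)
  have "card ?A \<le> card (N v) * (26 * k)"
    using card_knn_edges_at_le[OF kc fin] knn_choice_neighbours_subset[OF kc vP]
    by (intro card_UN_le_mult knn_choice_finite_neighbours[OF kc fin vP]) auto
  also have "\<dots> \<le> k * (26 * k)"
    using knn_choice_card_neighbours_le[OF kc vP] by simp
  finally have card_A: "card ?A \<le> 26 * k^2"
    by (simp add: power2_eq_square)
  have "card ?B \<le> card (knn_discs_containing P N w) * k"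
    using kc fin discs_sub by (rule card_knn_edges_from_le)
  also have "\<dots> \<le> 25 * k * k"
    using card_knn_discs_containing_le[OF kc fin] by simp
  finally have card_B: "card ?B \<le> 25 * k^2"
    by (simp add: power2_eq_square)
  have "?A \<union> ?B \<subseteq> knn_edges P N"
    using discs_sub unfolding knn_edges_eq[OF kc] by blast
  then have "card {f \<in> knn_edges P N. edges_cross {v, w} f} \<le> card (?A \<union> ?B)"
    using crossing_knn_edges_subset[OF kc vP wN] finite_knn_edges[OF kc fin]
    by (intro card_mono) (auto intro: finite_subset)
  also have "\<dots> \<le> card ?A + card ?B"
    by (rule card_Un_le)
  finally show ?thesis
    using card_A card_B by linarith
qed

theorem lemma37:
  shows "\<exists>C::real. \<forall>k::nat. k \<ge> 1 \<longrightarrow>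
    (\<forall>P N. finite P \<and> knn_choice k P N \<longrightarrow>
      (\<forall>e\<in>knn_edges P N.
         real (card {f \<in> knn_edges P N. edges_cross e f}) \<le> C * real k ^ 2))"
proof (intro exI[of _ 51] allI impI ballI)
  fix k :: nat and P N e
  assume "finite P \<and> knn_choice k P N" and e: "e \<in> knn_edges P N"
  then have fin: "finite P" and kc: "knn_choice k P N"
    by auto
  from e obtain v w where e_vw: "e = {v, w}" and vP: "v \<in> P" and wN: "w \<in> N v"
    unfolding knn_edges_eq[OF kc] by blast
  have "card {f \<in> knn_edges P N. edges_cross e f} \<le> 51 * k^2"
    unfolding e_vw by (rule card_crossing_knn_edges_le[OF kc fin vP wN])
  then show "real (card {f \<in> knn_edges P N. edges_cross e f}) \<le> 51 * real k ^ 2"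
    using of_nat_mono by fastforce
qed

end
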